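(* Let $p>2$ be the exponent of (P), $\varepsilon\in(0,2)$, $\rho>0$, and $\gamma$ with $1>\gamma\ge\frac2p+\frac\varepsilon2+\frac{\rho}{2p}$, and let $C>0$. Then there is a constant $C_{\rm osc}>0$ independent of $h$ such that every strictly positive $u_h\in U_h$ with $\mathcal E_h(u_h)\le Ch^{-\rho/(2+p)}$ satisfies $$\frac{u_h(x_i,y_j)}{u_h(x_{\hat i},y_{\hat j})}\le C_{\rm osc}$$ for all $i\in\{1,\dots,N_x\}$, $j\in\{1,\dots,N_y\}$, $\hat i\in\{i-1,i,i+1\}$ and $\hat j\in\{j-1,j,j+1\}$ (indices taken periodically).
   Context: Discretization setting. Let $L_x,L_y>0$, $\mathcal O^x=(0,L_x)$, $\mathcal O^y=(0,L_y)$, $\mathcal O=\mathcal O^x\times\mathcal O^y$; all functions are $\mathcal O$-periodic. For $h\in(0,1)$ let $h_x=L_x/N_x$, $h_y=L_y/N_y$ with $\hat c_1h\le h_x,h_y\le\hat C_2h$ for fixed constants $0<\hat c_1\le\hat C_2$ (Assumption (S)). Nodes are $x_i=(i-1)h_x$ and $y_j=(j-1)h_y$, with indices taken periodically. $U_h$ is the space of continuous periodic functions on $\overline{\mathcal O}$ that are bilinear on each rectangle $(x_i,x_{i+1})\times(y_j,y_{j+1})$. $\mathcal I_h^x$ and $\mathcal I_h^y$ are the nodal (piecewise linear) interpolation operators in $x$ and in $y$, each acting in its own variable for fixed value of the other; $\mathcal I_h^{xy}=\mathcal I_h^x\mathcal I_h^y$. For $u_h\in U_h$, $\Delta_hu_h\in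 U_h$ is the discrete Laplacian, given at nodes by the standard five-point formula $\Delta_hu_h=\frac{u_h(x+h_x,y)-2u_h(x,y)+u_h(x-h_x,y)}{h_x^2}+\frac{u_h(x,y+h_y)-2u_h(x,y)+u_h(x,y-h_y)}{h_y^2}$. (P): $F\in C^2((0,\infty))$, $F=+\infty$ on $(-\infty,0]$, and there are $p>2$ and positive constants with $F(u)\ge c_1u^{-p}$, $|F'(u)|\le\hat Cu^{-p-1}+\hat C$, and $\tilde c_1u^{-p-2}-\tilde c_2\le F''(u)\le\tilde Cu^{-p-2}+\tilde C$ for $u>0$. The regularized discrete energy is $$\mathcal E_h(u_h)=\tfrac12\int_{\mathcal O}\big[\mathcal I_h^y(|\partial_xu_h|^2)+\mathcal I_h^x(|\partial_yu_h|^2)\big]+\int_{\mathcal O}\mathcal I_h^{xy}(F(u_h))+\tfrac{h^\varepsilon}{2}\int_{\mathcal O}\mathcal I_h^{xy}(|\Delta_hu_h|^2).$$ *)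

theory Defs
  imports "HOL-Analysis.Analysis"
begin

definition node :: "real \<Rightarrow> int \<Rightarrow> real" where
  "node hh i = real_of_int (i - 1) * hh"

definition Uh :: "real \<Rightarrow> real \<Rightarrow> real \<Rightarrow> real \<Rightarrow> (real \<times> real \<Rightarrow> real) set" where
  "Uh Lx Ly hx hy = {u. continuous_on UNIV u
     \<and> (\<forall>x y. u (x + Lx, y) = u (x, y) \<and> u (x, y + Ly) = u (x, y))
     \<and> (\<forall>i j::int. \<exists>a b c d. \<forall>x y.
          x \<in> {of_int i * hx <..< of_int (i+1) * hx} \<longrightarrow>
          y \<in> {of_int j * hy <..< of_int (j+1) * hy} \<longrightarrow>
          u (x, y) = a + b * x + c * y + d * x * y)}"

definition pdx :: "(real \<times> real \<Rightarrow> real) \<Rightarrow> real \<times> real \<Rightarrow> real" where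
  "pdx u z = deriv (\<lambda>s. u (s, snd z)) (fst z)"

definition pdy :: "(real \<times> real \<Rightarrow> real) \<Rightarrow> real \<times> real \<Rightarrow> real" where
  "pdy u z = deriv (\<lambda>t. u (fst z, t)) (snd z)"

definition interp_x :: "real \<Rightarrow> (real \<times> real \<Rightarrow> real) \<Rightarrow> real \<times> real \<Rightarrow> real" where
  "interp_x hx g z = (let i = \<lfloor>fst z / hx\<rfloor>; t = fst z / hx - of_int i in
      (1 - t) * g (of_int i * hx, snd z) + t * g (of_int (i + 1) * hx, snd z))"

definition interp_y :: "real \<Rightarrow> (real \<times> real \<Rightarrow> real) \<Rightarrow> real \<times> real \<Rightarrow> real" where
  "interp_y hy g z = (let j = \<lfloor>snd z / hy\<rfloor>; t = snd z / hy - of_int j in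
      (1 - t) * g (fst z, of_int j * hy) + t * g (fst z, of_int (j + 1) * hy))"

definition interp_xy :: "real \<Rightarrow> real \<Rightarrow> (real \<times> real \<Rightarrow> real) \<Rightarrow> real \<times> real \<Rightarrow> real" where
  "interp_xy hx hy g = interp_x hx (interp_y hy g)"

definition five_point :: "real \<Rightarrow> real \<Rightarrow> (real \<times> real \<Rightarrow> real) \<Rightarrow> real \<times> real \<Rightarrow> real" where
  "five_point hx hy u z = (case z of (x, y) \<Rightarrow>
      (u (x + hx, y) - 2 * u (x, y) + u (x - hx, y)) / hx\<^sup>2
    + (u (x, y + hy) - 2 * u (x, y) + u (x, y - hy)) / hy\<^sup>2)"

definition disc_lap :: "real \<Rightarrow> real \<Rightarrow> (real \<times> real \<Rightarrow> real) \<Rightarrow> real \<times> real \<Rightarrow> real" where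
  "disc_lap hx hy u = interp_xy hx hy (five_point hx hy u)"

definition energy_h ::
  "real \<Rightarrow> real \<Rightarrow> real \<Rightarrow> real \<Rightarrow> real \<Rightarrow> real \<Rightarrow> (real \<Rightarrow> real) \<Rightarrow> (real \<times> real \<Rightarrow> real) \<Rightarrow> real" where
  "energy_h Lx Ly hx hy h eps F u =
     1/2 * integral (cbox (0,0) (Lx,Ly))
        (\<lambda>z. interp_y hy (\<lambda>w. (pdx u w)\<^sup>2) z + interp_x hx (\<lambda>w. (pdy u w)\<^sup>2) z)
   + integral (cbox (0,0) (Lx,Ly)) (interp_xy hx hy (\<lambda>w. F (u w)))
   + h powr eps / 2 * integral (cbox (0,0) (Lx,Ly)) (interp_xy hx hy (\<lambda>w. (disc_lap hx hy u w)\<^sup>2))"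

end

theory Submission
  imports Defs
begin

text \<open>All three terms of the energy are nonnegative, and the integral of the interpolant of
  nonnegative nodal data is at least hx hy/16 times any single nodal value. Applied to the
  potential term with F(v) \<ge> c1 v^(-p), this bounds every nodal value of u from below by a
  multiple of h^((s+2)/p), where s = rho/(2+p); applied to the regularization term, it bounds
  h^eps (\<Delta>_h u)^2 at every node by a multiple of h^(-(s+2)). The condition on gamma makes
  these combine to h^2 \<Delta>_h u \<le> W u at every node, with W independent of h. As u > 0, the
  five-point formula then bounds each neighbouring nodal value by a fixed multiple of the value
  at the node (a discrete Harnack inequality), and two such steps give the claim.\<close>

section \<open>Hat functions and nodal interpolation\<close>

definition hat :: "real \<Rightarrow> int \<Rightarrow> real \<Rightarrow> real" where
  "hat h i x = max 0 (1 - \<bar>x/h - of_int i\<bar>)"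

lemma hat_nonneg: "hat h i x \<ge> 0"
  by (simp add: hat_def)

lemma continuous_on_hat [continuous_intros]:
  "h > 0 \<Longrightarrow> continuous_on S f \<Longrightarrow> continuous_on S (\<lambda>z. hat h i (f z))"
  unfolding hat_def by (intro continuous_intros) auto

lemma hat_ge_half:
  assumes "h > 0" "of_int i * h \<le> x" "x \<le> of_int i * h + h/2"
  shows "hat h i x \<ge> 1/2"
proof -
  have "of_int i \<le> x/h" "x/h \<le> of_int i + 1/2"
    using assms by (simp_all add: field_simps)
  thus ?thesis unfolding hat_def by auto
qed

lemma sum_mult_hat:
  fixes a :: "int \<Rightarrow> real"
  assumes h: "h > 0" and fin: "finite I" and k: "\<lfloor>x/h\<rfloor> \<in> I" "\<lfloor>x/h\<rfloor> + 1 \<in> I"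
  shows "(\<Sum>i\<in>I. a i * hat h i x)
           = (1 - (x/h - \<lfloor>x/h\<rfloor>)) * a \<lfloor>x/h\<rfloor> + (x/h - \<lfloor>x/h\<rfloor>) * a (\<lfloor>x/h\<rfloor> + 1)"
proof -
  define k where "k = \<lfloor>x/h\<rfloor>"
  define t where "t = x/h - k"
  have t: "0 \<le> t" "t < 1" unfolding t_def k_def by linarith+
  have xk: "x/h = k + t" unfolding t_def by simp
  have hat_k: "hat h k x = 1 - t" and hat_Suc_k: "hat h (k+1) x = t"
    using t unfolding hat_def xk by simp_all
  have hat_other: "hat h i x = 0" if "i \<notin> {k, k+1}" for i
  proof -
    have "i \<le> k - 1 \<or> i \<ge> k + 2"
      using that by auto
    hence "real_of_int i \<le> k - 1 \<or> real_of_int i \<ge> k + 2"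
      by (metis of_int_le_iff)
    thus ?thesis using t unfolding hat_def xk by auto
  qed
  have "(\<Sum>i\<in>I. a i * hat h i x) = (\<Sum>i\<in>{k,k+1}. a i * hat h i x)"
    by (rule sum.mono_neutral_right) (use fin k hat_other in \<open>auto simp: k_def\<close>)
  also have "\<dots> = a k * (1-t) + a (k+1) * t"
    using hat_k hat_Suc_k by simp
  finally show ?thesis unfolding t_def k_def by (simp add: algebra_simps)
qed

lemma floor_divide_mem_grid:
  assumes "h > 0" "0 \<le> x" "x \<le> real N * h"
  shows "\<lfloor>x/h\<rfloor> \<in> {0..int N + 1}" "\<lfloor>x/h\<rfloor> + 1 \<in> {0..int N + 1}"
proof -
  have "0 \<le> x/h" "x/h \<le> real N"
    using assms by (simp_all add: divide_le_eq)
  hence "0 \<le> \<lfloor>x/h\<rfloor>" "\<lfloor>x/h\<rfloor> \<le> int N"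
    by (simp, metis floor_mono floor_of_nat)
  thus "\<lfloor>x/h\<rfloor> \<in> {0..int N + 1}" "\<lfloor>x/h\<rfloor> + 1 \<in> {0..int N + 1}" by auto
qed

lemma interp_y_eq_sum_hat:
  assumes "hy > 0" "0 \<le> y" "y \<le> real Ny * hy"
  shows "interp_y hy g (x, y) = (\<Sum>j\<in>{0..int Ny+1}. g (x, of_int j * hy) * hat hy j y)"
  unfolding interp_y_def Let_def
  by (subst sum_mult_hat[OF assms(1)]) (use floor_divide_mem_grid[OF assms] in auto)

lemma interp_xy_node:
  "hx > 0 \<Longrightarrow> hy > 0 \<Longrightarrow>
     interp_xy hx hy g (of_int i * hx, of_int j * hy) = g (of_int i * hx, of_int j * hy)"
  unfolding interp_xy_def interp_x_def interp_y_def Let_def by simp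

lemma interp_y_nonneg: "(\<And>w. g w \<ge> 0) \<Longrightarrow> interp_y hy g z \<ge> 0"
  unfolding interp_y_def Let_def
  by (intro add_nonneg_nonneg mult_nonneg_nonneg) (auto simp: algebra_simps, linarith)

lemma interp_x_nonneg: "(\<And>w. g w \<ge> 0) \<Longrightarrow> interp_x hx g z \<ge> 0"
  unfolding interp_x_def Let_def
  by (intro add_nonneg_nonneg mult_nonneg_nonneg) (auto simp: algebra_simps, linarith)

lemma interp_xy_nonneg: "(\<And>w. g w \<ge> 0) \<Longrightarrow> interp_xy hx hy g z \<ge> 0"
  unfolding interp_xy_def by (intro interp_x_nonneg interp_y_nonneg)

definition hat_expansion ::
    "nat \<Rightarrow> nat \<Rightarrow> real \<Rightarrow> real \<Rightarrow> (real \<times> real \<Rightarrow> real) \<Rightarrow> real \<times> real \<Rightarrow> real" where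
  "hat_expansion Nx Ny hx hy g z = (\<Sum>i\<in>{0..int Nx+1}.
     (\<Sum>j\<in>{0..int Ny+1}. g (of_int i * hx, of_int j * hy) * hat hy j (snd z)) * hat hx i (fst z))"

lemma interp_xy_eq_hat_expansion:
  assumes hx: "hx > 0" and hy: "hy > 0" and z: "z \<in> cbox (0, 0) (real Nx * hx, real Ny * hy)"
  shows "interp_xy hx hy g z = hat_expansion Nx Ny hx hy g z"
proof -
  obtain x y where xy: "z = (x, y)" "0 \<le> x" "x \<le> real Nx * hx" "0 \<le> y" "y \<le> real Ny * hy"
    using z by (cases z) auto
  have "interp_xy hx hy g (x, y)
          = (\<Sum>i\<in>{0..int Nx+1}. interp_y hy g (of_int i * hx, y) * hat hx i x)"
    unfolding interp_xy_def interp_x_def Let_def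
    by (subst sum_mult_hat[OF hx]) (use floor_divide_mem_grid[OF hx xy(2,3)] in auto)
  thus ?thesis
    unfolding hat_expansion_def xy(1) by (simp add: interp_y_eq_sum_hat[OF hy xy(4,5)])
qed

lemma continuous_on_hat_expansion:
  "hx > 0 \<Longrightarrow> hy > 0 \<Longrightarrow> continuous_on S (hat_expansion Nx Ny hx hy g)"
  unfolding hat_expansion_def by (intro continuous_intros) auto

lemma hat_expansion_nonneg:
  "(\<And>i j::int. g (of_int i * hx, of_int j * hy) \<ge> 0) \<Longrightarrow> hat_expansion Nx Ny hx hy g z \<ge> 0"
  unfolding hat_expansion_def by (intro sum_nonneg mult_nonneg_nonneg hat_nonneg)

lemma hat_expansion_ge_node:
  assumes hx: "hx > 0" and hy: "hy > 0"
    and g_nonneg: "\<And>i j::int. g (of_int i * hx, of_int j * hy) \<ge> 0"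
    and a: "0 \<le> a" "a \<le> int Nx + 1" and b: "0 \<le> b" "b \<le> int Ny + 1"
    and z: "z \<in> cbox (of_int a * hx, of_int b * hy) (of_int a * hx + hx/2, of_int b * hy + hy/2)"
  shows "g (of_int a * hx, of_int b * hy) / 4 \<le> hat_expansion Nx Ny hx hy g z"
proof -
  obtain x y where xy: "z = (x, y)" "of_int a * hx \<le> x" "x \<le> of_int a * hx + hx/2"
       "of_int b * hy \<le> y" "y \<le> of_int b * hy + hy/2"
    using z by (cases z) auto
  have "1/4 \<le> hat hy b y * hat hx a x"
    using mult_mono[OF hat_ge_half[OF hy xy(4,5)] hat_ge_half[OF hx xy(2,3)]] hat_nonneg[of hy b y]
    by simp
  from mult_left_mono[OF this g_nonneg]
  have "g (of_int a * hx, of_int b * hy) / 4 \<le> g (of_int a * hx, of_int b * hy) * hat hy b y * hat hx a x"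
    by (simp add: mult.assoc)
  also have "\<dots> \<le> (\<Sum>j\<in>{0..int Ny+1}. g (of_int a * hx, of_int j * hy) * hat hy j y) * hat hx a x"
    by (intro mult_right_mono member_le_sum hat_nonneg mult_nonneg_nonneg g_nonneg) (use b in auto)
  also have "\<dots> \<le> hat_expansion Nx Ny hx hy g z"
    unfolding hat_expansion_def xy(1) fst_conv snd_conv
    by (rule member_le_sum) (use a in \<open>auto intro!: hat_nonneg mult_nonneg_nonneg g_nonneg sum_nonneg\<close>)
  finally show ?thesis .
qed

lemma integral_nonneg_everywhere:
  fixes f :: "'a::euclidean_space \<Rightarrow> real"
  shows "(\<And>x. f x \<ge> 0) \<Longrightarrow> integral S f \<ge> 0"
  by (cases "f integrable_on S") (auto intro: integral_nonneg simp: not_integrable_integral)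

text \<open>The factor 1/16: on the quarter cell at the node, of area hx hy/4, both hat functions
  are at least 1/2.\<close>

lemma integral_interp_xy_ge_node:
  fixes g :: "real \<times> real \<Rightarrow> real"
  assumes hx: "hx > 0" and hy: "hy > 0" and Lx: "Lx = real Nx * hx" and Ly: "Ly = real Ny * hy"
    and g_nonneg: "\<And>i j::int. g (of_int i * hx, of_int j * hy) \<ge> 0"
    and a: "0 \<le> a" "a < int Nx" and b: "0 \<le> b" "b < int Ny"
  shows "hx*hy/16 * g (of_int a * hx, of_int b * hy)
           \<le> integral (cbox (0,0) (Lx,Ly)) (interp_xy hx hy g)"
proof -
  let ?S = "hat_expansion Nx Ny hx hy g"
  let ?B = "cbox (0,0) (Lx,Ly) :: (real\<times>real) set"
  define Q where "Q = cbox (of_int a * hx, of_int b * hy) (of_int a * hx + hx/2, of_int b * hy + hy/2)"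
  have S_integrable: "?S integrable_on cbox v w" for v w
    using hx hy by (intro integrable_continuous continuous_on_hat_expansion)
  have "of_int a * hx + hx/2 \<le> real Nx * hx" "of_int b * hy + hy/2 \<le> real Ny * hy"
    using mult_right_mono[of "of_int a + 1" "real Nx" hx] mult_right_mono[of "of_int b + 1" "real Ny" hy]
      a b hx hy by (simp_all add: algebra_simps)
  hence QB: "Q \<subseteq> ?B"
    using a b hx hy Lx Ly unfolding Q_def
    by (auto simp: subset_iff) (smt (verit) mult_nonneg_nonneg of_int_nonneg)+
  have "hx*hy/16 * g (of_int a * hx, of_int b * hy) = integral Q (\<lambda>_. g (of_int a * hx, of_int b * hy) / 4)"
    unfolding Q_def using hx hy by (simp add: content_Pair)
  also have "\<dots> \<le> integral Q ?S"
  proof (rule integral_le)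
    show "?S integrable_on Q"
      unfolding Q_def by (rule S_integrable)
    show "g (of_int a * hx, of_int b * hy) / 4 \<le> ?S z" if "z \<in> Q" for z
      by (rule hat_expansion_ge_node[where g=g, OF hx hy g_nonneg _ _ _ _ that[unfolded Q_def]])
         (use a b in auto)
  qed (unfold Q_def, rule integrable_const)
  also have "\<dots> \<le> integral ?B ?S"
    by (rule integral_subset_le[OF QB])
       (use S_integrable hat_expansion_nonneg[where g=g, OF g_nonneg] in \<open>simp_all add: Q_def\<close>)
  also have "\<dots> = integral ?B (interp_xy hx hy g)"
    using interp_xy_eq_hat_expansion[OF hx hy] unfolding Lx Ly by (intro integral_cong) simp
  finally show ?thesis .
qed

section \<open>Nodal bounds from the energy\<close>

lemma energy_h_ge_node_terms:
  assumes hx: "hx > 0" and hy: "hy > 0" and Lx: "Lx = real Nx * hx" and Ly: "Ly = real Ny * hy"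
    and F_pos: "\<And>v. v > 0 \<Longrightarrow> F v > 0" and u_pos: "\<And>z. u z > 0"
    and a: "0 \<le> a" "a < int Nx" and b: "0 \<le> b" "b < int Ny"
  shows "hx*hy/16 * F (u (of_int a * hx, of_int b * hy)) \<le> energy_h Lx Ly hx hy h eps F u"
    and "hx*hy/16 * (1/2 * (h powr eps * (five_point hx hy u (of_int a * hx, of_int b * hy))\<^sup>2))
           \<le> energy_h Lx Ly hx hy h eps F u"
proof -
  let ?B = "cbox (0,0) (Lx,Ly) :: (real \<times> real) set"
  let ?z = "(of_int a * hx, of_int b * hy)"
  define T1 where "T1 = integral ?B
    (\<lambda>z. interp_y hy (\<lambda>w. (pdx u w)\<^sup>2) z + interp_x hx (\<lambda>w. (pdy u w)\<^sup>2) z)"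
  define T2 where "T2 = integral ?B (interp_xy hx hy (\<lambda>w. F (u w)))"
  define T3 where "T3 = integral ?B (interp_xy hx hy (\<lambda>w. (disc_lap hx hy u w)\<^sup>2))"
  have E: "energy_h Lx Ly hx hy h eps F u = 1/2 * T1 + T2 + h powr eps / 2 * T3"
    unfolding energy_h_def T1_def T2_def T3_def ..
  have F_u_nonneg: "F (u w) \<ge> 0" for w
    using F_pos[OF u_pos] less_imp_le by blast
  have T1: "T1 \<ge> 0" unfolding T1_def
    by (intro integral_nonneg_everywhere add_nonneg_nonneg interp_y_nonneg interp_x_nonneg) simp_all
  have T2: "T2 \<ge> 0" unfolding T2_def
    by (intro integral_nonneg_everywhere interp_xy_nonneg F_u_nonneg)
  have T3: "T3 \<ge> 0" unfolding T3_def
    by (intro integral_nonneg_everywhere interp_xy_nonneg) simp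
  have reg_nonneg: "h powr eps / 2 * T3 \<ge> 0"
    using T3 by simp
  have "hx*hy/16 * F (u ?z) \<le> T2"
    using integral_interp_xy_ge_node[OF hx hy Lx Ly _ a b, of "\<lambda>w. F (u w)"] F_u_nonneg
    unfolding T2_def by blast
  thus "hx*hy/16 * F (u ?z) \<le> energy_h Lx Ly hx hy h eps F u"
    using E T1 reg_nonneg by linarith
  have "hx*hy/16 * (\<lambda>w. (disc_lap hx hy u w)\<^sup>2) ?z \<le> T3"
    unfolding T3_def by (rule integral_interp_xy_ge_node[OF hx hy Lx Ly _ a b]) simp
  hence "hx*hy/16 * (five_point hx hy u ?z)\<^sup>2 \<le> T3"
    by (simp add: disc_lap_def interp_xy_node[OF hx hy])
  from mult_left_mono[OF this, of "h powr eps / 2"]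
  show "hx*hy/16 * (1/2 * (h powr eps * (five_point hx hy u ?z)\<^sup>2)) \<le> energy_h Lx Ly hx hy h eps F u"
    using E T1 T2 by (simp add: algebra_simps)
qed

lemma le_powr_of_cell_bound:
  fixes c h k X B s hx hy :: real
  assumes c: "c > 0" and h: "h > 0" and k: "k > 0" and X: "X \<ge> 0"
    and cell: "c\<^sup>2 * h\<^sup>2 \<le> hx * hy" and bound: "hx*hy/16 * (k * X) \<le> B * h powr (-s)"
  shows "X \<le> 16*B/(k*c\<^sup>2) * h powr (-(s+2))"
proof -
  have "c\<^sup>2 * h\<^sup>2 * (k * X / 16) \<le> hx * hy * (k * X / 16)"
    by (rule mult_right_mono[OF cell]) (use k X in simp)
  hence "X * (k * c\<^sup>2 * h\<^sup>2 / 16) \<le> B * h powr (-s)"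
    using bound by (simp add: algebra_simps)
  moreover have "k * c\<^sup>2 * h\<^sup>2 / 16 > 0"
    using c h k by simp
  ultimately have "X \<le> B * h powr (-s) / (k * c\<^sup>2 * h\<^sup>2 / 16)"
    by (simp add: pos_le_divide_eq)
  also have "\<dots> = 16*B/(k*c\<^sup>2) * (h powr (-s - 2))"
    using h by (simp add: powr_diff powr_numeral field_simps)
  finally show ?thesis
    by (simp add: algebra_simps)
qed

lemma powr_lower_bound_of_inverse_powr:
  fixes v Q h p s :: real
  assumes v: "v > 0" and p: "p > 0" and Q: "Q > 0" and h: "h > 0"
    and le: "v powr (-p) \<le> Q * h powr (-s)"
  shows "Q powr (-1/p) * h powr (s/p) \<le> v"
proof -
  have "(Q * h powr (-s)) powr (-1/p) \<le> (v powr (-p)) powr (-1/p)"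
    by (rule powr_mono2') (use p v le in auto)
  also have "\<dots> = v"
    using p v by (simp add: powr_powr)
  also have "(Q * h powr (-s)) powr (-1/p) = Q powr (-1/p) * h powr (s/p)"
    by (simp add: powr_mult powr_powr)
  finally show ?thesis .
qed

text \<open>Here v is a nodal value and L the discrete Laplacian there; the exponent condition lets
  the bound on L from the regularization term be absorbed by the lower bound on v from the
  potential.\<close>

lemma sq_mult_le_of_powr_bounds:
  fixes h v L P Q p s e :: real
  assumes h: "0 < h" "h < 1" and v: "v > 0" and p: "p > 0" and Q: "Q > 0" and P: "P \<ge> 0"
    and v_bound: "v powr (-p) \<le> Q * h powr (-(s+2))"
    and L_bound: "h powr e * L\<^sup>2 \<le> P * h powr (-(s+2))"
    and exponents: "(s+2)/p \<le> 1 - (s+e)/2"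
  shows "h\<^sup>2 * L \<le> sqrt P * Q powr (1/p) * v"
proof (cases "L \<le> 0")
  case True
  have "h\<^sup>2 * L \<le> 0" using True by (simp add: mult_nonneg_nonpos)
  also have "0 \<le> sqrt P * Q powr (1/p) * v" using P v by simp
  finally show ?thesis .
next
  case False
  have "L\<^sup>2 = h powr (-e) * (h powr e * L\<^sup>2)"
    using h by (simp add: powr_minus)
  also have "\<dots> \<le> h powr (-e) * (P * h powr (-(s+2)))"
    by (rule mult_left_mono[OF L_bound]) simp
  also have "\<dots> = P * h powr (-(s+e+2))"
    by (simp add: powr_add[symmetric] algebra_simps)
  finally have "sqrt (L\<^sup>2) \<le> sqrt (P * h powr (-(s+e+2)))"
    by (simp only: real_sqrt_le_iff)
  hence L: "L \<le> sqrt P * h powr (-(s+e+2)/2)"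
    using False h by (simp add: real_sqrt_mult powr_half_sqrt_powr)
  have "h\<^sup>2 * L \<le> h\<^sup>2 * (sqrt P * h powr (-(s+e+2)/2))"
    using L by (simp add: mult_left_mono)
  also have "\<dots> = sqrt P * h powr (1 - (s+e)/2)"
  proof -
    have "h\<^sup>2 * h powr (-(s+e+2)/2) = h powr (2 + -(s+e+2)/2)"
      using h by (simp add: powr_add powr_numeral)
    also have "2 + -(s+e+2)/2 = 1 - (s+e)/2"
      by (simp add: field_simps)
    finally show ?thesis by (simp add: algebra_simps)
  qed
  also have "\<dots> \<le> sqrt P * h powr ((s+2)/p)"
    by (intro mult_left_mono powr_mono') (use h exponents P in auto)
  also have "\<dots> = sqrt P * Q powr (1/p) * (Q powr (-1/p) * h powr ((s+2)/p))"
  proof -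
    have "Q powr (1/p) * Q powr (-1/p) = 1"
      using Q by (simp add: powr_add[symmetric])
    thus ?thesis by (simp add: algebra_simps)
  qed
  also have "\<dots> \<le> sqrt P * Q powr (1/p) * v"
    by (intro mult_left_mono powr_lower_bound_of_inverse_powr) (use v p Q h v_bound P in auto)
  finally show ?thesis .
qed

lemma exponent_condition:
  fixes p eps rho :: real
  assumes p: "p > 0" and sum_le: "2/p + eps/2 + rho/(2*p) \<le> 1"
  shows "(rho/(2+p) + 2)/p \<le> 1 - (rho/(2+p) + eps)/2"
proof -
  define s where "s = rho/(2+p)"
  have "s * (2+p) = rho"
    unfolding s_def using p by simp
  moreover have "(s + 2)/p + (s + eps)/2 = 2/p + eps/2 + s * (2+p)/(2*p)"
    using p by (simp add: field_simps)
  ultimately have "(s + 2)/p + (s + eps)/2 = 2/p + eps/2 + rho/(2*p)"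
    by simp
  thus ?thesis
    unfolding s_def using sum_le by linarith
qed

lemma scaled_five_point_le_in_period:
  fixes u :: "real \<times> real \<Rightarrow> real" and F :: "real \<Rightarrow> real"
  assumes h: "0 < h" "h < 1" and c: "c > 0" and hx: "c*h \<le> hx" and hy: "c*h \<le> hy"
    and Lx: "Lx = real Nx * hx" and Ly: "Ly = real Ny * hy"
    and p: "p > 0" and c1: "c1 > 0" and F_lower: "\<And>v. v > 0 \<Longrightarrow> c1 * v powr (-p) \<le> F v"
    and u_pos: "\<And>z. u z > 0" and C: "C > 0"
    and E: "energy_h Lx Ly hx hy h eps F u \<le> C * h powr (-s)"
    and exponents: "(s+2)/p \<le> 1 - (s+eps)/2"
    and a: "0 \<le> a" "a < int Nx" and b: "0 \<le> b" "b < int Ny"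
  shows "h\<^sup>2 * five_point hx hy u (of_int a * hx, of_int b * hy)
           \<le> sqrt (32*C/c\<^sup>2) * (16*C/(c1*c\<^sup>2)) powr (1/p) * u (of_int a * hx, of_int b * hy)"
proof -
  let ?z = "(of_int a * hx, of_int b * hy)"
  have ch: "c*h > 0" using c h by simp
  hence hx0: "hx > 0" and hy0: "hy > 0" using hx hy by linarith+
  have "(c*h) * (c*h) \<le> hx * hy"
    by (rule mult_mono[OF hx hy]) (use ch hx in auto)
  hence cell: "c\<^sup>2 * h\<^sup>2 \<le> hx * hy"
    by (simp add: power2_eq_square algebra_simps)
  have F_pos: "F v > 0" if "v > 0" for v
    using F_lower[OF that] c1 that by (smt (verit) mult_pos_pos powr_gt_zero)
  note node_terms = energy_h_ge_node_terms[where F=F and u=u and h=h and eps=eps,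
      OF hx0 hy0 Lx Ly F_pos u_pos a b]
  have "hx*hy/16 * (c1 * u ?z powr (-p)) \<le> hx*hy/16 * F (u ?z)"
    using F_lower[OF u_pos] hx0 hy0 by (simp add: mult_left_mono)
  hence "u ?z powr (-p) \<le> 16*C/(c1*c\<^sup>2) * h powr (-(s+2))"
    using node_terms(1) E by (intro le_powr_of_cell_bound[OF c h(1) c1 _ cell]) auto
  moreover have "h powr eps * (five_point hx hy u ?z)\<^sup>2 \<le> 16*C/(1/2*c\<^sup>2) * h powr (-(s+2))"
    using node_terms(2) E by (intro le_powr_of_cell_bound[OF c h(1) _ _ cell]) auto
  ultimately show ?thesis
    using C c c1 by (intro sq_mult_le_of_powr_bounds[OF h u_pos p _ _ _ _ exponents]) simp_all
qed

section \<open>Periodic extension to all nodes\<close>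

lemma periodic_add_of_nat:
  fixes f :: "real \<Rightarrow> 'a"
  assumes "\<And>x. f (x + L) = f x"
  shows "f (x + real n * L) = f x"
proof (induction n)
  case (Suc n)
  have "x + real (Suc n) * L = (x + real n * L) + L" by (simp add: algebra_simps)
  then show ?case using assms[of "x + real n * L"] Suc by (simp only:)
qed simp

lemma periodic_add_of_int:
  fixes f :: "real \<Rightarrow> 'a"
  assumes "\<And>x. f (x + L) = f x"
  shows "f (x + of_int k * L) = f x"
proof (cases "k \<ge> 0")
  case True
  then obtain n where "k = int n" by (metis nonneg_eq_int)
  then show ?thesis using periodic_add_of_nat[of f L, OF assms] by simp
next
  case False
  define n where "n = nat (-k)"
  have k: "k = - int n" using False by (simp add: n_def)
  have "f x = f ((x + of_int k * L) + real n * L)" by (simp add: k)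
  also have "\<dots> = f (x + of_int k * L)" by (rule periodic_add_of_nat[of f L, OF assms])
  finally show ?thesis by simp
qed

lemma Uh_add_periods:
  assumes "u \<in> Uh Lx Ly hx hy"
  shows "u (x + of_int k * Lx, y + of_int l * Ly) = u (x, y)"
proof -
  have "\<And>x y. u (x + Lx, y) = u (x, y)" "\<And>x y. u (x, y + Ly) = u (x, y)"
    using assms unfolding Uh_def by auto
  then show ?thesis
    using periodic_add_of_int[of "\<lambda>s. u (s, y + of_int l * Ly)" Lx x k]
      periodic_add_of_int[of "\<lambda>t. u (x, t)" Ly y l] by simp
qed

lemma five_point_add_periods:
  assumes "u \<in> Uh Lx Ly hx hy"
  shows "five_point hx hy u (x + of_int k * Lx, y + of_int l * Ly) = five_point hx hy u (x, y)"
proof -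
  have shift: "u (x' + of_int k * Lx, y' + of_int l * Ly) = u (x', y')" for x' y'
    by (rule Uh_add_periods[OF assms])
  show ?thesis
    using shift[of x y] shift[of "x + hx" y] shift[of "x - hx" y]
      shift[of x "y + hy"] shift[of x "y - hy"]
    unfolding five_point_def by (simp add: algebra_simps)
qed

lemma grid_periodic_reduce:
  fixes Q :: "real \<times> real \<Rightarrow> bool"
  assumes Q: "\<And>x y k l. Q (x + of_int k * Lx, y + of_int l * Ly) = Q (x, y)"
    and Lx: "Lx = real Nx * hx" and Ly: "Ly = real Ny * hy" and Nx: "Nx > 0" and Ny: "Ny > 0"
    and in_period: "\<And>a b. 0 \<le> a \<Longrightarrow> a < int Nx \<Longrightarrow> 0 \<le> b \<Longrightarrow> b < int Ny \<Longrightarrow>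
                       Q (of_int a * hx, of_int b * hy)"
  shows "Q (of_int a * hx, of_int b * hy)"
proof -
  have node_mod: "of_int m * hh = of_int (m mod int N) * hh + of_int (m div int N) * (real N * hh)"
    for m :: int and N :: nat and hh :: real
  proof -
    have "real_of_int m = real_of_int (m div int N) * real N + real_of_int (m mod int N)"
      by (metis div_mult_mod_eq of_int_add of_int_mult of_int_of_nat_eq)
    thus ?thesis by (simp add: algebra_simps)
  qed
  have "Q (of_int (a mod int Nx) * hx, of_int (b mod int Ny) * hy)"
    using Nx Ny by (intro in_period) simp_all
  thus ?thesis
    by (simp only: node_mod[where m=a and N=Nx and hh=hx] node_mod[where m=b and N=Ny and hh=hy] Q
        flip: Lx Ly)
qed

lemma scaled_five_point_le:
  fixes u :: "real \<times> real \<Rightarrow> real" and F :: "real \<Rightarrow> real"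
  assumes h: "0 < h" "h < 1" and c: "c > 0" and hx: "c*h \<le> hx" and hy: "c*h \<le> hy"
    and Lx: "Lx = real Nx * hx" and Ly: "Ly = real Ny * hy" and Nx: "Nx > 0" and Ny: "Ny > 0"
    and p: "p > 0" and c1: "c1 > 0" and F_lower: "\<And>v. v > 0 \<Longrightarrow> c1 * v powr (-p) \<le> F v"
    and u: "u \<in> Uh Lx Ly hx hy" and u_pos: "\<And>z. u z > 0" and C: "C > 0"
    and E: "energy_h Lx Ly hx hy h eps F u \<le> C * h powr (-s)"
    and exponents: "(s+2)/p \<le> 1 - (s+eps)/2"
  shows "h\<^sup>2 * five_point hx hy u (of_int a * hx, of_int b * hy)
           \<le> sqrt (32*C/c\<^sup>2) * (16*C/(c1*c\<^sup>2)) powr (1/p) * u (of_int a * hx, of_int b * hy)"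
  by (rule grid_periodic_reduce[OF _ Lx Ly Nx Ny,
        where Q = "\<lambda>z. h\<^sup>2 * five_point hx hy u z \<le> sqrt (32*C/c\<^sup>2) * (16*C/(c1*c\<^sup>2)) powr (1/p) * u z"])
     (simp_all add: five_point_add_periods[OF u] Uh_add_periods[OF u]
        scaled_five_point_le_in_period[OF h c hx hy Lx Ly p c1 F_lower u_pos C E exponents])

section \<open>A discrete Harnack inequality\<close>

lemma stencil_neighbour_le:
  fixes hx hy a b c d e K :: real
  assumes hx: "hx > 0" and hy: "hy > 0" and nonneg: "b \<ge> 0" "d \<ge> 0" "e \<ge> 0"
    and K: "(a + b - 2*c)/hx\<^sup>2 + (d + e - 2*c)/hy\<^sup>2 \<le> K"
  shows "a \<le> hx\<^sup>2 * K + (2 + 2*(hx\<^sup>2/hy\<^sup>2)) * c"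
proof -
  have "(a + b - 2*c)/hx\<^sup>2 + (d + e - 2*c)/hy\<^sup>2
          = a/hx\<^sup>2 + b/hx\<^sup>2 - 2*c/hx\<^sup>2 + d/hy\<^sup>2 + e/hy\<^sup>2 - 2*c/hy\<^sup>2"
    by (simp add: diff_divide_distrib add_divide_distrib)
  moreover have "b/hx\<^sup>2 \<ge> 0" "d/hy\<^sup>2 \<ge> 0" "e/hy\<^sup>2 \<ge> 0"
    using nonneg by simp_all
  ultimately have "a/hx\<^sup>2 \<le> K + 2*c/hx\<^sup>2 + 2*c/hy\<^sup>2"
    using K by linarith
  from mult_left_mono[OF this, of "hx\<^sup>2"]
  have "hx\<^sup>2 * (a/hx\<^sup>2) \<le> hx\<^sup>2 * (K + 2*c/hx\<^sup>2 + 2*c/hy\<^sup>2)"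
    by simp
  moreover have "hx\<^sup>2 * (K + 2*c/hx\<^sup>2 + 2*c/hy\<^sup>2) = hx\<^sup>2 * K + (2 + 2*(hx\<^sup>2/hy\<^sup>2)) * c"
    using hx hy by (simp add: field_simps)
  ultimately show ?thesis
    using hx by simp
qed

lemma five_point_neighbours_le:
  assumes hx: "hx > 0" and hy: "hy > 0" and u_pos: "\<And>z. u z > 0"
    and K: "five_point hx hy u (x, y) \<le> K"
  shows "u (x + hx, y) \<le> hx\<^sup>2 * K + (2 + 2*(hx\<^sup>2/hy\<^sup>2)) * u (x, y)"
    and "u (x - hx, y) \<le> hx\<^sup>2 * K + (2 + 2*(hx\<^sup>2/hy\<^sup>2)) * u (x, y)"
    and "u (x, y + hy) \<le> hy\<^sup>2 * K + (2 + 2*(hy\<^sup>2/hx\<^sup>2)) * u (x, y)"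
    and "u (x, y - hy) \<le> hy\<^sup>2 * K + (2 + 2*(hy\<^sup>2/hx\<^sup>2)) * u (x, y)"
proof -
  have nn: "u z \<ge> 0" for z
    using u_pos less_imp_le by blast
  have K': "(u (x + hx, y) + u (x - hx, y) - 2 * u (x, y))/hx\<^sup>2
            + (u (x, y + hy) + u (x, y - hy) - 2 * u (x, y))/hy\<^sup>2 \<le> K"
    using K unfolding five_point_def by (simp add: algebra_simps)
  show "u (x + hx, y) \<le> hx\<^sup>2 * K + (2 + 2*(hx\<^sup>2/hy\<^sup>2)) * u (x, y)"
    by (rule stencil_neighbour_le[OF hx hy nn nn nn K'])
  show "u (x - hx, y) \<le> hx\<^sup>2 * K + (2 + 2*(hx\<^sup>2/hy\<^sup>2)) * u (x, y)"
    by (rule stencil_neighbour_le[where b="u (x + hx, y)" and d="u (x, y + hy)" and e="u (x, y - hy)",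
          OF hx hy nn nn nn]) (use K' in \<open>simp add: ac_simps\<close>)
  show "u (x, y + hy) \<le> hy\<^sup>2 * K + (2 + 2*(hy\<^sup>2/hx\<^sup>2)) * u (x, y)"
    by (rule stencil_neighbour_le[where b="u (x, y - hy)" and d="u (x + hx, y)" and e="u (x - hx, y)",
          OF hy hx nn nn nn]) (use K' in \<open>simp add: ac_simps\<close>)
  show "u (x, y - hy) \<le> hy\<^sup>2 * K + (2 + 2*(hy\<^sup>2/hx\<^sup>2)) * u (x, y)"
    by (rule stencil_neighbour_le[where b="u (x, y + hy)" and d="u (x + hx, y)" and e="u (x - hx, y)",
          OF hy hx nn nn nn]) (use K' in \<open>simp add: ac_simps\<close>)
qed

definition neighbour_ratio_bound :: "real \<Rightarrow> real \<Rightarrow> real \<Rightarrow> real" where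
  "neighbour_ratio_bound c C2 W = 2 + 2*(C2/c)\<^sup>2 + C2\<^sup>2 * W"

lemma neighbour_ratio_bound_ge_two: "W \<ge> 0 \<Longrightarrow> neighbour_ratio_bound c C2 W \<ge> 2"
  unfolding neighbour_ratio_bound_def by simp

lemma mesh_ratio_sq_le:
  fixes c h hh kk C2 :: real
  assumes c: "c > 0" and h: "h > 0" and hh: "0 < hh" "hh \<le> C2*h" and kk: "c*h \<le> kk"
  shows "hh\<^sup>2/kk\<^sup>2 \<le> (C2/c)\<^sup>2"
proof -
  have kk0: "kk > 0"
    using mult_pos_pos[OF c h] kk by linarith
  have "hh/kk \<le> (C2*h)/(c*h)"
    by (rule frac_le) (use c h hh kk in auto)
  also have "\<dots> = C2/c"
    using h by simp
  finally have "(hh/kk)\<^sup>2 \<le> (C2/c)\<^sup>2"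
    by (rule power_mono) (use hh kk0 in simp)
  thus ?thesis by (simp add: power_divide)
qed

lemma neighbour_coefficients_le:
  fixes c h hh kk C2 W v :: real
  assumes c: "c > 0" and h: "h > 0" and hh: "c*h \<le> hh" "hh \<le> C2*h" and kk: "c*h \<le> kk"
    and W: "W \<ge> 0" and v: "v \<ge> 0"
  shows "hh\<^sup>2 * (W * v / h\<^sup>2) + (2 + 2*(hh\<^sup>2/kk\<^sup>2)) * v \<le> neighbour_ratio_bound c C2 W * v"
proof -
  have ch: "c*h > 0" using c h by simp
  have "hh\<^sup>2 \<le> (C2*h)\<^sup>2"
    by (rule power_mono) (use ch hh in auto)
  hence "hh\<^sup>2 / h\<^sup>2 \<le> C2\<^sup>2"
    using h by (simp add: power_mult_distrib divide_le_eq)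
  from mult_right_mono[OF this, of "W * v"]
  have "hh\<^sup>2 * (W * v / h\<^sup>2) \<le> C2\<^sup>2 * W * v"
    using W v by (simp add: algebra_simps)
  moreover have "hh\<^sup>2/kk\<^sup>2 \<le> (C2/c)\<^sup>2"
    by (rule mesh_ratio_sq_le[OF c h _ hh(2) kk]) (use ch hh in linarith)
  hence "(2 + 2*(hh\<^sup>2/kk\<^sup>2)) * v \<le> (2 + 2*(C2/c)\<^sup>2) * v"
    using v by (simp add: mult_right_mono)
  ultimately show ?thesis
    unfolding neighbour_ratio_bound_def by (simp add: algebra_simps)
qed

lemma grid_neighbour_le:
  assumes c: "c > 0" and h: "h > 0"
    and hx: "c*h \<le> hx" "hx \<le> C2*h" and hy: "c*h \<le> hy" "hy \<le> C2*h"
    and W: "W \<ge> 0" and u_pos: "\<And>z. u z > 0"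
    and lap: "\<And>a b. h\<^sup>2 * five_point hx hy u (of_int a * hx, of_int b * hy)
                        \<le> W * u (of_int a * hx, of_int b * hy)"
  shows "a' \<in> {a-1, a, a+1} \<Longrightarrow> u (of_int a' * hx, of_int b * hy)
           \<le> neighbour_ratio_bound c C2 W * u (of_int a * hx, of_int b * hy)"
    and "b' \<in> {b-1, b, b+1} \<Longrightarrow> u (of_int a * hx, of_int b' * hy)
           \<le> neighbour_ratio_bound c C2 W * u (of_int a * hx, of_int b * hy)"
proof -
  define x where "x = of_int a * hx"
  define y where "y = of_int b * hy"
  define \<Lambda> where "\<Lambda> = neighbour_ratio_bound c C2 W"
  have ch: "c*h > 0" using c h by simp
  hence hx0: "hx > 0" and hy0: "hy > 0" using hx hy by linarith+
  have u: "u (x, y) > 0" by (rule u_pos)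
  have K: "five_point hx hy u (x, y) \<le> W * u (x, y) / h\<^sup>2"
    using lap[of a b] h by (simp add: x_def y_def pos_le_divide_eq mult.commute)
  have bound: "hh\<^sup>2 * (W * u (x, y) / h\<^sup>2) + (2 + 2*(hh\<^sup>2/kk\<^sup>2)) * u (x, y) \<le> \<Lambda> * u (x, y)"
    if "c*h \<le> hh" "hh \<le> C2*h" "c*h \<le> kk" for hh kk
    unfolding \<Lambda>_def using u by (intro neighbour_coefficients_le[OF c h that W]) simp
  note neighbours = five_point_neighbours_le[OF hx0 hy0 u_pos K]
  have "1 \<le> \<Lambda>"
    using neighbour_ratio_bound_ge_two[OF W, of c C2] unfolding \<Lambda>_def by simp
  hence "u (x, y) \<le> \<Lambda> * u (x, y)"
    using mult_right_mono[of 1 \<Lambda> "u (x, y)"] u by simp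
  moreover have "u (x + hx, y) \<le> \<Lambda> * u (x, y)" "u (x - hx, y) \<le> \<Lambda> * u (x, y)"
    using neighbours(1,2) bound[OF hx hy(1)] by linarith+
  moreover have "u (x, y + hy) \<le> \<Lambda> * u (x, y)" "u (x, y - hy) \<le> \<Lambda> * u (x, y)"
    using neighbours(3,4) bound[OF hy hx(1)] by linarith+
  ultimately show "a' \<in> {a-1, a, a+1} \<Longrightarrow> u (of_int a' * hx, of_int b * hy) \<le> \<Lambda> * u (x, y)"
    and "b' \<in> {b-1, b, b+1} \<Longrightarrow> u (of_int a * hx, of_int b' * hy) \<le> \<Lambda> * u (x, y)"
    by (auto simp: x_def y_def algebra_simps)
qed

lemma grid_ratio_le:
  assumes c: "c > 0" and h: "h > 0"
    and hx: "c*h \<le> hx" "hx \<le> C2*h" and hy: "c*h \<le> hy" "hy \<le> C2*h"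
    and W: "W \<ge> 0" and u_pos: "\<And>z. u z > 0"
    and lap: "\<And>a b. h\<^sup>2 * five_point hx hy u (of_int a * hx, of_int b * hy)
                        \<le> W * u (of_int a * hx, of_int b * hy)"
    and a': "a' \<in> {a-1, a, a+1}" and b': "b' \<in> {b-1, b, b+1}"
  shows "u (of_int a' * hx, of_int b' * hy) / u (of_int a * hx, of_int b * hy)
           \<le> (neighbour_ratio_bound c C2 W)\<^sup>2"
proof -
  let ?\<Lambda> = "neighbour_ratio_bound c C2 W"
  note neighbour = grid_neighbour_le[OF c h hx hy W u_pos lap]
  have "u (of_int a' * hx, of_int b' * hy) \<le> ?\<Lambda> * u (of_int a * hx, of_int b' * hy)"
    by (rule neighbour(1)[OF a'])
  also have "\<dots> \<le> ?\<Lambda> * (?\<Lambda> * u (of_int a * hx, of_int b * hy))"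
    by (rule mult_left_mono[OF neighbour(2)[OF b']])
       (use neighbour_ratio_bound_ge_two[OF W, of c C2] in simp)
  finally have "u (of_int a' * hx, of_int b' * hy) \<le> ?\<Lambda>\<^sup>2 * u (of_int a * hx, of_int b * hy)"
    by (simp only: power2_eq_square mult.assoc)
  thus ?thesis
    by (rule pos_divide_le_eq[OF u_pos, THEN iffD2])
qed

theorem lemma3p4:
  fixes Lx Ly c1hat C2hat p eps rho gamma C :: real
    and F F' F'' :: "real \<Rightarrow> real"
  assumes Lx: "Lx > 0" and Ly: "Ly > 0"
    and S: "0 < c1hat" "c1hat \<le> C2hat"
    and F_deriv: "\<forall>u>0. (F has_real_derivative F' u) (at u)"
    and F'_deriv: "\<forall>u>0. (F' has_real_derivative F'' u) (at u)"
    and F''_cont: "continuous_on {0<..} F''"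
    and p: "p > 2"
    and F_lower: "\<exists>c1>0. \<forall>u>0. F u \<ge> c1 * u powr (-p)"
    and F'_bound: "\<exists>Ch>0. \<forall>u>0. \<bar>F' u\<bar> \<le> Ch * u powr (-p-1) + Ch"
    and F''_bound: "\<exists>ct1>0. \<exists>ct2>0. \<exists>Ct>0. \<forall>u>0.
                      ct1 * u powr (-p-2) - ct2 \<le> F'' u \<and> F'' u \<le> Ct * u powr (-p-2) + Ct"
    and eps: "0 < eps" "eps < 2"
    and rho: "rho > 0"
    and gamma: "gamma < 1" "gamma \<ge> 2/p + eps/2 + rho/(2*p)"
    and C: "C > 0"
  shows "\<exists>Cosc>0. \<forall>h (Nx::nat) (Ny::nat) u.
           0 < h \<longrightarrow> h < 1 \<longrightarrow> 0 < Nx \<longrightarrow> 0 < Ny \<longrightarrow>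
           c1hat * h \<le> Lx / Nx \<longrightarrow> Lx / Nx \<le> C2hat * h \<longrightarrow>
           c1hat * h \<le> Ly / Ny \<longrightarrow> Ly / Ny \<le> C2hat * h \<longrightarrow>
           u \<in> Uh Lx Ly (Lx / Nx) (Ly / Ny) \<longrightarrow> (\<forall>z. u z > 0) \<longrightarrow>
           energy_h Lx Ly (Lx / Nx) (Ly / Ny) h eps F u \<le> C * h powr (-rho/(2+p)) \<longrightarrow>
           (\<forall>i j ih jh :: int. 1 \<le> i \<longrightarrow> i \<le> int Nx \<longrightarrow> 1 \<le> j \<longrightarrow> j \<le> int Ny \<longrightarrow>
              ih \<in> {i-1, i, i+1} \<longrightarrow> jh \<in> {j-1, j, j+1} \<longrightarrow>
              u (node (Lx / Nx) i, node (Ly / Ny) j) / u (node (Lx / Nx) ih, node (Ly / Ny) jh) \<le> Cosc)"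
proof -
  obtain c1 where c1: "c1 > 0" and F_lower': "\<And>v. v > 0 \<Longrightarrow> c1 * v powr (-p) \<le> F v"
    using F_lower by blast
  define W where "W = sqrt (32*C/c1hat\<^sup>2) * (16*C/(c1*c1hat\<^sup>2)) powr (1/p)"
  have W: "W \<ge> 0"
    unfolding W_def using C by simp
  have exponents: "(rho/(2+p) + 2)/p \<le> 1 - (rho/(2+p) + eps)/2"
    using p gamma by (intro exponent_condition) simp_all
  show ?thesis
  proof (intro exI[of _ "(neighbour_ratio_bound c1hat C2hat W)\<^sup>2"] conjI allI impI)
    show "(neighbour_ratio_bound c1hat C2hat W)\<^sup>2 > 0"
      using neighbour_ratio_bound_ge_two[OF W, of c1hat C2hat] by simp
  next
    fix h :: real and Nx Ny :: nat and u :: "real \<times> real \<Rightarrow> real" and i j ih jh :: int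
    assume h: "0 < h" "h < 1" and Nx: "0 < Nx" and Ny: "0 < Ny"
      and hx: "c1hat * h \<le> Lx / Nx" "Lx / Nx \<le> C2hat * h"
      and hy: "c1hat * h \<le> Ly / Ny" "Ly / Ny \<le> C2hat * h"
      and u: "u \<in> Uh Lx Ly (Lx / Nx) (Ly / Ny)" and u_pos: "\<forall>z. u z > 0"
      and E: "energy_h Lx Ly (Lx / Nx) (Ly / Ny) h eps F u \<le> C * h powr (-rho/(2+p))"
      and "1 \<le> i" "i \<le> int Nx" "1 \<le> j" "j \<le> int Ny"
      and ih: "ih \<in> {i-1, i, i+1}" and jh: "jh \<in> {j-1, j, j+1}"
    have u_pos': "\<And>z. u z > 0"
      using u_pos by blast
    have lap: "h\<^sup>2 * five_point (Lx / Nx) (Ly / Ny) u (of_int a * (Lx / Nx), of_int b * (Ly / Ny))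
                 \<le> W * u (of_int a * (Lx / Nx), of_int b * (Ly / Ny))" for a b
      unfolding W_def using Nx Ny p
      by (intro scaled_five_point_le[OF h S(1) hx(1) hy(1) _ _ Nx Ny _ c1 F_lower' u u_pos' C
            E[folded minus_divide_left] exponents]) simp_all
    show "u (node (Lx / Nx) i, node (Ly / Ny) j) / u (node (Lx / Nx) ih, node (Ly / Ny) jh)
            \<le> (neighbour_ratio_bound c1hat C2hat W)\<^sup>2"
      unfolding node_def by (rule grid_ratio_le[OF S(1) h(1) hx hy W u_pos' lap]) (use ih jh in auto)
  qed
qed

end
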